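(* Let $R$ be a lattice diagram of a knot or link. (1) Suppose that two problem crossings of $R$ are adjacent. Then either the two problem crossings have the same crossing type and neither is a bad neighbor of the other, or they have opposite crossing types and each is a bad neighbor of the other. (2) Suppose that four crossings of $R$ are the vertices of a unit square of the $\mathbb{Z}^2$ lattice. If at least two of these four crossings are problem crossings whose two adjacent crossings among the four are among its bad neighbors, then all four crossings are problem crossings and the four crossings form a Celtic configuration. (3) If $R$ has a problem crossing with more than two bad neighbors that are problem crossings, then $R$ has a Celtic configuration.
   Context: A lattice diagram of a knot or link is a knot or link diagram (with over/under information at finitely many transverse double points, the crossings) contained in the $\mathbb{Z}^2$ lattice (vertices the integer points, edges the unit segments parallel to the axes) with all crossings at lattice vertices. At a crossing $c$, the $x$-strand (resp. $y$-strand) is the union of the two horizontal (resp. vertical) lattice edges of $R$ with endpoint $c$; $c$ is an $x$-crossing (resp. $y$-crossing) if the over-strand is the $x$-strand (resp. $y$-strand); this is its crossing type. The crossing graph of $R$ is the subgraph of the $\mathbb{Z}^2$ lattice with a vertex at each crossing of $R$ and an edge between any two crossings at lattice distance $1$; two crossings are adjacent if they are joined by an edge of this graph. Two neighbors $a,b$ of a vertex $v$ in this graph are nearby neighbors of $v$ if the edges $va$ and $vb$ are perpendicular, and opposing neighbors if they are parallel. A crossing $c$ is a problem crossing if it has a pair of nearby neighbors in the crossing graph that both have crossing type opposite to that of $c$; any crossing belonging to such a pair is called a bad neighbor of $c$ (a problem crossing may have more than two bad neighbors). A Celtic configuration is a set of four crossings at the four vertices of a unit square of the $\mathbb{Z}^2$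 lattice such that any two of them joined by a side of the square have opposite crossing types. *)

theory Defs
  imports Main
begin

type_synonym pt = "int \<times> int"

text \<open>A lattice diagram: a finite set of unit lattice edges, encoded by
  the horizontal edges (the edge from p to p + (1,0) is recorded as p) and
  the vertical edges (the edge from p to p + (0,1) is recorded as p), together
  with the over/under information at the crossings: xover c = True means that c
  is an x-crossing (the horizontal strand is the over-strand), False means
  that c is a y-crossing.  The value of xover away from crossings is irrelevant.\<close>
record diagram =
  hedges :: "pt set"
  vedges :: "pt set"
  xover :: "pt \<Rightarrow> bool"

definition ldeg :: "diagram \<Rightarrow> pt \<Rightarrow> nat" where
  "ldeg R p =
     (if p \<in> hedges R then 1 else 0) + (if (fst p - 1, snd p) \<in> hedges R then 1 else 0)
   + (if p \<in> vedges R then 1 else 0) + (if (fst p, snd p - 1) \<in> vedges R then 1 else 0)"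

text \<open>A lattice diagram of a knot or link: a nonempty finite union of lattice
  edges in which every lattice vertex has degree 0, 2 or 4.  Degree-2 vertices
  are ordinary points of the curve; degree-4 vertices are the transverse double
  points, i.e. the crossings (the strands go straight through).\<close>
definition lattice_diagram :: "diagram \<Rightarrow> bool" where
  "lattice_diagram R \<longleftrightarrow> finite (hedges R) \<and> finite (vedges R)
     \<and> hedges R \<union> vedges R \<noteq> {} \<and> (\<forall>p. ldeg R p \<in> {0, 2, 4})"

definition is_crossing :: "diagram \<Rightarrow> pt \<Rightarrow> bool" where
  "is_crossing R p \<longleftrightarrow> p \<in> hedges R \<and> (fst p - 1, snd p) \<in> hedges R
     \<and> p \<in> vedges R \<and> (fst p, snd p - 1) \<in> vedges R"

definition unit_dist :: "pt \<Rightarrow> pt \<Rightarrow> bool" where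
  "unit_dist a b \<longleftrightarrow> \<bar>fst a - fst b\<bar> + \<bar>snd a - snd b\<bar> = 1"

definition adjacent :: "diagram \<Rightarrow> pt \<Rightarrow> pt \<Rightarrow> bool" where
  "adjacent R a b \<longleftrightarrow> is_crossing R a \<and> is_crossing R b \<and> unit_dist a b"

definition nearby :: "diagram \<Rightarrow> pt \<Rightarrow> pt \<Rightarrow> pt \<Rightarrow> bool" where
  "nearby R v a b \<longleftrightarrow> adjacent R v a \<and> adjacent R v b
     \<and> (fst a - fst v) * (fst b - fst v) + (snd a - snd v) * (snd b - snd v) = 0"

definition problem_crossing :: "diagram \<Rightarrow> pt \<Rightarrow> bool" where
  "problem_crossing R c \<longleftrightarrow> is_crossing R c \<and>
     (\<exists>a b. nearby R c a b \<and> xover R a \<noteq> xover R c \<and> xover R b \<noteq> xover R c)"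

definition bad_neighbor :: "diagram \<Rightarrow> pt \<Rightarrow> pt \<Rightarrow> bool" where
  "bad_neighbor R c a \<longleftrightarrow> problem_crossing R c \<and>
     (\<exists>b. nearby R c a b \<and> xover R a \<noteq> xover R c \<and> xover R b \<noteq> xover R c)"

definition unit_square :: "pt \<Rightarrow> pt set" where
  "unit_square p = {p, (fst p + 1, snd p), (fst p + 1, snd p + 1), (fst p, snd p + 1)}"

definition celtic :: "diagram \<Rightarrow> pt \<Rightarrow> bool" where
  "celtic R p \<longleftrightarrow> (\<forall>q \<in> unit_square p. is_crossing R q) \<and>
     (\<forall>q \<in> unit_square p. \<forall>r \<in> unit_square p. unit_dist q r \<longrightarrow> xover R q \<noteq> xover R r)"

end

(* Everything rests on one local observation: the two nearby opposite-type neighbours of a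
   problem crossing c point along both axes, so in every direction orthogonal to a given edge
   at c there is an opposite-type neighbour of c.  Hence every opposite-type neighbour of a
   problem crossing is a bad neighbour, which gives (1).  For (3), three bad neighbours of c
   contain an opposite pair c + w, c - w and a third c + u with u orthogonal to w; the problem
   crossing c + u has an opposite-type neighbour c + u + w' with w' = w or -w, and the four
   points c, c + u, c + w', c + u + w' form a Celtic configuration. *)
theory Submission
  imports Defs "HOL-Library.Product_Plus"
begin

definition dot :: "pt \<Rightarrow> pt \<Rightarrow> int" where
  "dot u v = fst u * fst v + snd u * snd v"

definition lattice_units :: "pt set" where
  "lattice_units = {(1, 0), (-1, 0), (0, 1), (0, -1)}"

lemma unit_dist_iff_diff_in_lattice_units: "unit_dist a b \<longleftrightarrow> b - a \<in> lattice_units"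
  by (cases a, cases b) (auto simp: unit_dist_def lattice_units_def abs_if)

lemma unit_dist_sym: "unit_dist a b \<longleftrightarrow> unit_dist b a"
  by (auto simp: unit_dist_def abs_minus_commute)

lemma nearby_iff_dot:
  "nearby R v a b \<longleftrightarrow> adjacent R v a \<and> adjacent R v b \<and> dot (a - v) (b - v) = 0"
  by (simp add: nearby_def dot_def)

lemma uminus_in_lattice_units: "u \<in> lattice_units \<Longrightarrow> - u \<in> lattice_units"
  by (auto simp: lattice_units_def)

lemma dot_lattice_units_orthogonal_cases:
  assumes "u \<in> lattice_units" "e \<in> lattice_units" "f \<in> lattice_units" "dot e f = 0"
  shows "dot u e = 0 \<or> dot u f = 0"
  using assms by (auto simp: lattice_units_def dot_def)

lemma lattice_units_orthogonal_unique:
  assumes "u \<in> lattice_units" "w \<in> lattice_units" "v \<in> lattice_units" "dot u w = 0" "dot u v = 0"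
  shows "v = w \<or> v = - w"
  using assms by (auto simp: lattice_units_def dot_def)

lemma three_lattice_units:
  assumes "S \<subseteq> lattice_units" "card S > 2"
  obtains w u where "w \<in> S" "- w \<in> S" "u \<in> S" "dot u w = 0"
proof -
  have card_units: "card lattice_units = 4"
    by (simp add: lattice_units_def)
  have "\<exists>m \<in> lattice_units. lattice_units - {m} \<subseteq> S"
  proof (cases "lattice_units \<subseteq> S")
    case True
    then show ?thesis by (auto simp: lattice_units_def)
  next
    case False
    then obtain m where m: "m \<in> lattice_units" "m \<notin> S" by blast
    have "S \<subseteq> lattice_units - {m}" using assms(1) m(2) by blast
    moreover have "card (lattice_units - {m}) = 3" using m(1) card_units by simp
    ultimately have "S = lattice_units - {m}"
      using assms(2) by (intro card_seteq) (auto simp: lattice_units_def)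
    with m show ?thesis by blast
  qed
  then obtain m where m: "m \<in> lattice_units" "lattice_units - {m} \<subseteq> S" by blast
  have in_S: "v \<in> S" if "v \<in> lattice_units" "v \<noteq> m" for v
    using m(2) that by blast
  have m_cases: "m = (1, 0) \<or> m = (-1, 0) \<or> m = (0, 1) \<or> m = (0, -1)"
    using m(1) unfolding lattice_units_def by blast
  \<comment> \<open>the swap of m and -m are units other than m, and they are orthogonal\<close>
  show ?thesis
  proof (rule that)
    show "(snd m, fst m) \<in> S" "- (snd m, fst m) \<in> S" "- m \<in> S"
      by (rule in_S; use m_cases in \<open>force simp: lattice_units_def\<close>)+
    show "dot (- m) (snd m, fst m) = 0"
      using m_cases by (auto simp: dot_def)
  qed
qed

lemma adjacentD:
  assumes "adjacent R c a"
  shows "is_crossing R c" "is_crossing R a" "a - c \<in> lattice_units"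
  using assms by (auto simp: adjacent_def unit_dist_iff_diff_in_lattice_units)

lemma adjacent_sym: "adjacent R a b \<longleftrightarrow> adjacent R b a"
  by (auto simp: adjacent_def unit_dist_sym)

lemma bad_neighborD:
  assumes "bad_neighbor R c a"
  shows "adjacent R c a" "xover R a \<noteq> xover R c"
  using assms by (auto simp: bad_neighbor_def nearby_def)

lemma problem_crossingI:
  assumes "is_crossing R c" "u \<in> lattice_units" "w \<in> lattice_units" "dot u w = 0"
    "is_crossing R (c + u)" "is_crossing R (c + w)"
    "xover R (c + u) \<noteq> xover R c" "xover R (c + w) \<noteq> xover R c"
  shows "problem_crossing R c"
  unfolding problem_crossing_def nearby_iff_dot
  using assms by (intro conjI exI[of _ "c + u"] exI[of _ "c + w"])
    (auto simp: adjacent_def unit_dist_iff_diff_in_lattice_units)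

lemma problem_crossing_obtains_orthogonal_opposite_neighbor:
  assumes "problem_crossing R c" "v - c \<in> lattice_units"
  obtains g where "adjacent R c g" "xover R g \<noteq> xover R c" "dot (v - c) (g - c) = 0"
proof -
  obtain a b where ab: "nearby R c a b" "xover R a \<noteq> xover R c" "xover R b \<noteq> xover R c"
    using assms(1) unfolding problem_crossing_def by blast
  then have "adjacent R c a" "adjacent R c b" "dot (a - c) (b - c) = 0"
    by (simp_all add: nearby_iff_dot)
  then show ?thesis
    using dot_lattice_units_orthogonal_cases[OF assms(2)] ab(2,3) that
    by (metis adjacentD(3))
qed

lemma bad_neighbor_if_opposite_type:
  assumes "problem_crossing R c" "adjacent R c v" "xover R v \<noteq> xover R c"
  shows "bad_neighbor R c v"
proof -
  obtain g where "adjacent R c g" "xover R g \<noteq> xover R c" "dot (v - c) (g - c) = 0"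
    using problem_crossing_obtains_orthogonal_opposite_neighbor[OF assms(1) adjacentD(3)[OF assms(2)]] .
  with assms show ?thesis
    unfolding bad_neighbor_def nearby_iff_dot by blast
qed

lemma adjacent_problem_crossings:
  assumes "adjacent R a b" "problem_crossing R a" "problem_crossing R b"
  shows "(xover R a = xover R b \<and> \<not> bad_neighbor R a b \<and> \<not> bad_neighbor R b a)
       \<or> (xover R a \<noteq> xover R b \<and> bad_neighbor R a b \<and> bad_neighbor R b a)"
proof (cases "xover R a = xover R b")
  case True
  then show ?thesis by (auto dest: bad_neighborD(2))
next
  case False
  then show ?thesis
    using assms bad_neighbor_if_opposite_type adjacent_sym by metis
qed

lemma celtic_iff:
  "celtic R (x, y) \<longleftrightarrow>
     is_crossing R (x, y) \<and> is_crossing R (x + 1, y) \<and> is_crossing R (x + 1, y + 1) \<and> is_crossing R (x, y + 1)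
     \<and> xover R (x + 1, y) = (\<not> xover R (x, y)) \<and> xover R (x + 1, y + 1) = xover R (x, y)
     \<and> xover R (x, y + 1) = (\<not> xover R (x, y))"
  unfolding celtic_def unit_square_def unit_dist_def by auto

lemma ex_celtic_if_alternating_square:
  assumes "u \<in> lattice_units" "w \<in> lattice_units" "dot u w = 0"
    "is_crossing R c" "is_crossing R (c + u)" "is_crossing R (c + w)" "is_crossing R (c + u + w)"
    "xover R (c + u) \<noteq> xover R c" "xover R (c + w) \<noteq> xover R c" "xover R (c + u + w) = xover R c"
  shows "\<exists>p. celtic R p"
proof -
  obtain x y where c: "c = (x, y)" by (cases c)
  let ?p = "(x + min 0 (fst u + fst w), y + min 0 (snd u + snd w))"
  have "celtic R ?p"
    using assms unfolding c lattice_units_def dot_def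
    by (auto simp: celtic_iff)
  then show ?thesis ..
qed

lemma problem_crossing_if_celtic:
  assumes "celtic R p" "q \<in> unit_square p"
  shows "problem_crossing R q"
proof -
  obtain x y where p: "p = (x, y)" by (cases p)
  have q: "q \<in> {(x, y), (x + 1, y), (x + 1, y + 1), (x, y + 1)}"
    using assms(2) by (simp add: p unit_square_def)
  \<comment> \<open>the two square neighbours of q are q + u and q + w\<close>
  show ?thesis
  proof (rule problem_crossingI[where u = "(2 * x + 1 - 2 * fst q, 0)" and w = "(0, 2 * y + 1 - 2 * snd q)"])
  qed (use assms(1) q in \<open>auto simp: p celtic_iff lattice_units_def dot_def\<close>)
qed

lemma celtic_if_two_alternating_corners:
  assumes "\<forall>q \<in> unit_square p. is_crossing R q"
    "q1 \<in> unit_square p" "q2 \<in> unit_square p" "q1 \<noteq> q2"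
    "\<And>q r. q \<in> {q1, q2} \<Longrightarrow> r \<in> unit_square p \<Longrightarrow> unit_dist q r \<Longrightarrow> xover R r \<noteq> xover R q"
  shows "celtic R p"
proof -
  obtain x y where p: "p = (x, y)" by (cases p)
  let ?a = "xover R (x, y)" and ?b = "xover R (x + 1, y)"
    and ?c = "xover R (x + 1, y + 1)" and ?d = "xover R (x, y + 1)"
  have alt: "xover R r \<noteq> xover R q" if "q \<in> {q1, q2}" "q \<in> unit_square p" "r \<in> unit_square p"
    "unit_dist q r" for q r
    using assms(5) that by blast
  have "(x, y) \<in> {q1, q2} \<Longrightarrow> ?b \<noteq> ?a \<and> ?d \<noteq> ?a"
    "(x + 1, y) \<in> {q1, q2} \<Longrightarrow> ?a \<noteq> ?b \<and> ?c \<noteq> ?b"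
    "(x + 1, y + 1) \<in> {q1, q2} \<Longrightarrow> ?b \<noteq> ?c \<and> ?d \<noteq> ?c"
    "(x, y + 1) \<in> {q1, q2} \<Longrightarrow> ?a \<noteq> ?d \<and> ?c \<noteq> ?d"
    by (intro conjI alt; simp add: p unit_square_def unit_dist_def)+
  \<comment> \<open>two distinct corners cover three sides, and alternation on three sides of a 4-cycle forces the fourth\<close>
  moreover have "q1 \<in> {(x, y), (x + 1, y), (x + 1, y + 1), (x, y + 1)}"
    "q2 \<in> {(x, y), (x + 1, y), (x + 1, y + 1), (x, y + 1)}"
    using assms(2,3) by (simp_all add: p unit_square_def)
  ultimately have "?b = (\<not> ?a) \<and> ?c = ?a \<and> ?d = (\<not> ?a)"
    using assms(4) by (cases ?a; cases ?b; cases ?c; cases ?d) auto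
  then show ?thesis
    using assms(1) by (simp add: p celtic_iff unit_square_def)
qed

lemma ex_celtic_if_three_bad_problem_neighbors:
  assumes "card {a. bad_neighbor R c a \<and> problem_crossing R a} > 2"
  shows "\<exists>p. celtic R p"
proof -
  let ?N = "{a. bad_neighbor R c a \<and> problem_crossing R a}"
  have "inj_on (\<lambda>a. a - c) ?N" by (rule inj_onI) simp
  then have "card ((\<lambda>a. a - c) ` ?N) > 2"
    using assms by (simp add: card_image)
  moreover have "(\<lambda>a. a - c) ` ?N \<subseteq> lattice_units"
    using bad_neighborD(1) adjacentD(3) by blast
  ultimately obtain w u where
    "w \<in> (\<lambda>a. a - c) ` ?N" "- w \<in> (\<lambda>a. a - c) ` ?N" "u \<in> (\<lambda>a. a - c) ` ?N" "dot u w = 0"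
    using three_lattice_units by blast
  moreover have "c + v \<in> ?N" if "v \<in> (\<lambda>a. a - c) ` ?N" for v
    using that by (metis (no_types, lifting) add.commute diff_add_cancel imageE)
  ultimately have bad: "bad_neighbor R c (c + w)" "bad_neighbor R c (c + - w)" "bad_neighbor R c (c + u)"
    and u: "problem_crossing R (c + u)" "dot u w = 0"
    by blast+
  have units: "u \<in> lattice_units" "w \<in> lattice_units"
    using adjacentD(3)[OF bad_neighborD(1)] bad(1,3) by (metis add_diff_cancel_left')+
  obtain g where g: "adjacent R (c + u) g" "xover R g \<noteq> xover R (c + u)" "dot (- u) (g - (c + u)) = 0"
    using problem_crossing_obtains_orthogonal_opposite_neighbor[OF u(1), of c]
      uminus_in_lattice_units[OF units(1)] by auto
  have "g - (c + u) = w \<or> g - (c + u) = - w"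
    using lattice_units_orthogonal_unique[OF uminus_in_lattice_units units(2) adjacentD(3)[OF g(1)]]
      units u(2) g(3) by (simp add: dot_def)
  then obtain w' where w': "w' \<in> {w, - w}" "g = c + u + w'"
    by (metis add.commute diff_add_cancel insertI1 insertI2 singletonI)
  have "bad_neighbor R c (c + w')" using w'(1) bad(1,2) by blast
  show ?thesis
  proof (rule ex_celtic_if_alternating_square[OF units(1)])
    show "w' \<in> lattice_units"
      using w'(1) units(2) uminus_in_lattice_units by blast
    show "dot u w' = 0"
      using w'(1) u(2) by (auto simp: dot_def)
    show "is_crossing R c" "is_crossing R (c + u)" "xover R (c + u) \<noteq> xover R c"
      using bad(3) by (auto dest: bad_neighborD adjacentD)
    show "is_crossing R (c + w')" "xover R (c + w') \<noteq> xover R c"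
      using \<open>bad_neighbor R c (c + w')\<close> by (auto dest: bad_neighborD adjacentD)
    show "is_crossing R (c + u + w')" "xover R (c + u + w') = xover R c"
      using g(1,2) w'(2) bad_neighborD(2)[OF bad(3)] by (auto dest: adjacentD)
  qed
qed

theorem lemma3p6:
  assumes "lattice_diagram R"
  shows "(\<forall>a b. adjacent R a b \<and> problem_crossing R a \<and> problem_crossing R b \<longrightarrow>
            (xover R a = xover R b \<and> \<not> bad_neighbor R a b \<and> \<not> bad_neighbor R b a)
          \<or> (xover R a \<noteq> xover R b \<and> bad_neighbor R a b \<and> bad_neighbor R b a))
       \<and> (\<forall>p. (\<forall>q \<in> unit_square p. is_crossing R q) \<and>
              card {q \<in> unit_square p. problem_crossing R q \<and>
                       (\<forall>r \<in> unit_square p. unit_dist q r \<longrightarrow> bad_neighbor R q r)} \<ge> 2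
            \<longrightarrow> (\<forall>q \<in> unit_square p. problem_crossing R q) \<and> celtic R p)
       \<and> ((\<exists>c. problem_crossing R c \<and>
               card {a. bad_neighbor R c a \<and> problem_crossing R a} > 2)
            \<longrightarrow> (\<exists>p. celtic R p))"
proof (intro conjI allI impI)
  \<comment> \<open>the argument is local\<close>
  fix a b
  assume "adjacent R a b \<and> problem_crossing R a \<and> problem_crossing R b"
  then show "(xover R a = xover R b \<and> \<not> bad_neighbor R a b \<and> \<not> bad_neighbor R b a)
          \<or> (xover R a \<noteq> xover R b \<and> bad_neighbor R a b \<and> bad_neighbor R b a)"
    using adjacent_problem_crossings by blast
next
  fix p
  let ?Q = "{q \<in> unit_square p. problem_crossing R q \<and>
               (\<forall>r \<in> unit_square p. unit_dist q r \<longrightarrow> bad_neighbor R q r)}"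
  assume h: "(\<forall>q \<in> unit_square p. is_crossing R q) \<and> card ?Q \<ge> 2"
  have "finite ?Q" by (simp add: unit_square_def)
  with h have "\<not> card ?Q \<le> Suc 0" by simp
  then obtain q1 q2 where q: "q1 \<in> ?Q" "q2 \<in> ?Q" "q1 \<noteq> q2"
    using card_le_Suc0_iff_eq[OF \<open>finite ?Q\<close>] by blast
  show celtic: "celtic R p"
  proof (rule celtic_if_two_alternating_corners[of p R q1 q2])
    show "xover R r \<noteq> xover R q"
      if "q \<in> {q1, q2}" "r \<in> unit_square p" "unit_dist q r" for q r
      using q that bad_neighborD(2) by blast
  qed (use h q in blast)+
  show "\<forall>q \<in> unit_square p. problem_crossing R q"
    using problem_crossing_if_celtic[OF celtic] by blast
next
  assume "\<exists>c. problem_crossing R c \<and> card {a. bad_neighbor R c a \<and> problem_crossing R a} > 2"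
  then show "\<exists>p. celtic R p"
    using ex_celtic_if_three_bad_problem_neighbors by blast
qed

end
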